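(* Let $m\ge2$ be fixed and assume (A1)–(A4). Let $X_{\mathbf 1}$ be the number of coupons collected by all $m$ collectors. If $\operatorname{Var}(X_{\mathbf 1})$ converges to a finite limit, then $\alpha_1,\alpha_2\in\{0,1\}$. This condition is not sufficient: for $m=2$ and $a_1=a_2=n^{2/3}$ (so $\alpha_1=\alpha_2=0$), $\operatorname{Var}(X_{\mathbf 1})\sim n^{1/3}\to\infty$.
   Context: Coupon collector model: there are $n$ distinct coupons and $m$ collectors acting independently; collector $i$ collects a uniformly random subset of exactly $a_i$ distinct coupons, independently of the others. We consider a sequence of such models indexed by $n$, with $m$ fixed and $a_i=a_i(n)$, under the asymptotic assumptions: (A1) $n\to\infty$; (A2) $a_i\to\infty$ and $n-a_i\to\infty$ for each $i$; (A3) $1\le a_1\le a_2\le\cdots\le a_m\le n-1$; (A4) $a_i/n\to\alpha_i\in[0,1]$ for each $i$. $x_n\sim y_n$ means $x_n/y_n\to1$. *)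

theory Defs
  imports "HOL-Probability.Probability" "HOL-Library.Landau_Symbols"
begin

definition coupon_pmf :: "nat \<Rightarrow> nat \<Rightarrow> (nat \<Rightarrow> nat) \<Rightarrow> (nat \<Rightarrow> nat set) pmf" where
  "coupon_pmf n m a =
     Pi_pmf {1..m} {} (\<lambda>i. pmf_of_set {S. S \<subseteq> {..<n} \<and> card S = a i})"

definition X_all :: "nat \<Rightarrow> (nat \<Rightarrow> nat set) \<Rightarrow> real" where
  "X_all m S = real (card (\<Inter>i\<in>{1..m}. S i))"

definition coupon_var :: "nat \<Rightarrow> nat \<Rightarrow> (nat \<Rightarrow> nat) \<Rightarrow> real" where
  "coupon_var n m a = measure_pmf.variance (coupon_pmf n m a) (X_all m)"

end

theory Submission
  imports Defs "HOL-Real_Asymp.Real_Asymp"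
begin

text \<open>Writing \<open>X_1\<close> as the sum over all coupons of the indicator that every collector holds
the coupon gives \<open>Var X_1 = n P + n (n - 1) Q - n\<^sup>2 P\<^sup>2\<close>, where \<open>P = \<Prod>i. a\<^sub>i / n\<close> and
\<open>Q = \<Prod>i. a\<^sub>i (a\<^sub>i - 1) / (n (n - 1))\<close>. Splitting off one collector \<open>k\<close>, with \<open>p = a\<^sub>k / n\<close> and
\<open>P'\<close> the product over the others, the variance becomes a multiple of \<open>p (1 - p) P' (1 - P')\<close> of
size at least \<open>n\<close> plus a nonnegative multiple of the variance for the remaining collectors.
For sorted sizes, \<open>k = 1\<close> bounds the variance below by a multiple of \<open>n - a\<^sub>2\<close>, and \<open>k = 2\<close>
by a multiple of \<open>a\<^sub>1\<close>; both multiples stay away from \<open>0\<close> when \<open>\<alpha>\<^sub>1\<close>, respectively \<open>\<alpha>\<^sub>2\<close>,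
lies strictly between \<open>0\<close> and \<open>1\<close>, so the variance diverges. For two collectors of equal
size \<open>c\<close> the variance is \<open>c\<^sup>2 (n - c)\<^sup>2 / (n\<^sup>2 (n - 1))\<close>.\<close>

lemma card_subsets_containing:
  assumes "finite A" "B \<subseteq> A" "card B \<le> k"
  shows "card {S. S \<subseteq> A \<and> card S = k \<and> B \<subseteq> S} = (card A - card B) choose (k - card B)"
proof -
  have fin: "finite B" "finite (A - B)" using assms finite_subset by auto
  have "bij_betw (\<lambda>T. T \<union> B) {T. T \<subseteq> A - B \<and> card T = k - card B}
          {S. S \<subseteq> A \<and> card S = k \<and> B \<subseteq> S}"
  proof (rule bij_betw_byWitness[where f' = "\<lambda>S. S - B"])
    show "(\<lambda>T. T \<union> B) ` {T. T \<subseteq> A - B \<and> card T = k - card B}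
            \<subseteq> {S. S \<subseteq> A \<and> card S = k \<and> B \<subseteq> S}"
    proof safe
      fix T assume "T \<subseteq> A - B" "card T = k - card B"
      moreover from this have "finite T" using fin finite_subset by blast
      ultimately show "card (T \<union> B) = k"
        using assms fin by (subst card_Un_disjoint) auto
    qed (use assms in auto)
    show "(\<lambda>S. S - B) ` {S. S \<subseteq> A \<and> card S = k \<and> B \<subseteq> S}
            \<subseteq> {T. T \<subseteq> A - B \<and> card T = k - card B}"
      using fin by (auto simp: card_Diff_subset)
  qed auto
  then show ?thesis
    using n_subsets[OF fin(2), of "k - card B"] assms
    by (simp add: bij_betw_same_card card_Diff_subset[OF fin(1) assms(2)])
qed

definition k_subsets :: "nat \<Rightarrow> nat \<Rightarrow> nat set set" where
  "k_subsets n k = {S. S \<subseteq> {..<n} \<and> card S = k}"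

lemma finite_k_subsets: "finite (k_subsets n k)"
  unfolding k_subsets_def by (rule finite_subset[of _ "Pow {..<n}"]) auto

lemma k_subsets_nonempty: "k \<le> n \<Longrightarrow> k_subsets n k \<noteq> {}"
  unfolding k_subsets_def by (auto intro!: exI[of _ "{..<k}"])

lemma card_k_subsets: "card (k_subsets n k) = n choose k"
  unfolding k_subsets_def using n_subsets[of "{..<n}" k] by simp

lemma expectation_k_subsets_superset:
  assumes "k \<le> n" "B \<subseteq> {..<n}"
  shows "measure_pmf.expectation (pmf_of_set (k_subsets n k)) (\<lambda>S. of_bool (B \<subseteq> S))
       = (if card B \<le> k then real ((n - card B) choose (k - card B)) / real (n choose k) else 0)"
proof -
  have "measure_pmf.expectation (pmf_of_set (k_subsets n k)) (\<lambda>S. of_bool (B \<subseteq> S))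
      = real (card (k_subsets n k \<inter> {S. B \<subseteq> S})) / real (card (k_subsets n k))"
    using finite_k_subsets k_subsets_nonempty[OF assms(1)] by (simp add: integral_pmf_of_set)
  also have "k_subsets n k \<inter> {S. B \<subseteq> S} = {S. S \<subseteq> {..<n} \<and> card S = k \<and> B \<subseteq> S}"
    unfolding k_subsets_def by auto
  finally have E: "measure_pmf.expectation (pmf_of_set (k_subsets n k)) (\<lambda>S. of_bool (B \<subseteq> S))
      = real (card {S. S \<subseteq> {..<n} \<and> card S = k \<and> B \<subseteq> S}) / real (n choose k)"
    by (simp only: card_k_subsets)
  have "{S. S \<subseteq> {..<n} \<and> card S = k \<and> B \<subseteq> S} = {}" if "k < card B"
    using that by (auto dest: card_mono[OF finite_subset[OF _ finite_lessThan]])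
  then show ?thesis
    unfolding E using card_subsets_containing[of "{..<n}" B k] assms by auto
qed

lemma expectation_k_subsets_member:
  assumes "k \<le> n" "j < n"
  shows "measure_pmf.expectation (pmf_of_set (k_subsets n k)) (\<lambda>S. of_bool (j \<in> S))
       = real k / real n"
proof (cases "k = 0")
  case False
  have "k * (n choose k) = n * (n - 1 choose (k - 1))"
    using times_binomial_minus1_eq[of k n] False by simp
  then have "real k * real (n choose k) = real n * real (n - 1 choose (k - 1))"
    by (metis of_nat_mult)
  then have "real (n - 1 choose (k - 1)) = real k * real (n choose k) / real n"
    using assms by (simp add: field_simps)
  then show ?thesis
    using expectation_k_subsets_superset[of k n "{j}"] assms False by simp
qed (use expectation_k_subsets_superset[of k n "{j}"] assms in simp)

lemma expectation_k_subsets_pair: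
  assumes "k \<le> n" "j < n" "l < n" "j \<noteq> l"
  shows "measure_pmf.expectation (pmf_of_set (k_subsets n k)) (\<lambda>S. of_bool (j \<in> S \<and> l \<in> S))
       = real k * (real k - 1) / (real n * (real n - 1))"
proof (cases "k < 2")
  case True
  then have "k = 0 \<or> k = 1" by auto
  then show ?thesis using expectation_k_subsets_superset[of k n "{j, l}"] assms by auto
next
  case False
  have "k * (n choose k) = n * (n - 1 choose (k - 1))"
    using times_binomial_minus1_eq[of k n] False by simp
  moreover have "(k - 1) * (n - 1 choose (k - 1)) = (n - 1) * (n - 2 choose (k - 2))"
    using times_binomial_minus1_eq[of "k - 1" "n - 1"] False by (simp add: numeral_2_eq_2)
  ultimately have "(k * (k - 1)) * (n choose k) = (n * (n - 1)) * (n - 2 choose (k - 2))"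
    by (metis mult.assoc mult.left_commute)
  then have "real (k * (k - 1) * (n choose k)) = real (n * (n - 1) * (n - 2 choose (k - 2)))"
    by (rule arg_cong)
  then have "real k * (real k - 1) * real (n choose k) = real n * (real n - 1) * real (n - 2 choose (k - 2))"
    using False assms by (simp only: of_nat_mult of_nat_diff) simp
  moreover have "real n * (real n - 1) > 0" using False assms by simp
  ultimately have "real (n - 2 choose (k - 2)) = real k * (real k - 1) * real (n choose k) / (real n * (real n - 1))"
    using False assms by (simp add: eq_divide_eq mult.commute)
  moreover have "n choose k > 0" using assms by simp
  ultimately show ?thesis
    using expectation_k_subsets_superset[of k n "{j, l}"] assms False by (simp add: numeral_2_eq_2)
qed

lemma prod_of_bool:
  "finite I \<Longrightarrow> (\<Prod>i\<in>I. of_bool (P i)) = (of_bool (\<forall>i\<in>I. P i) :: 'a :: comm_semiring_1)"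
  by (induction I rule: finite_induct) auto

lemma X_all_eq_sum_indicators:
  assumes "m \<ge> 1" "S 1 \<subseteq> {..<n}"
  shows "X_all m S = (\<Sum>j<n. \<Prod>i\<in>{1..m}. of_bool (j \<in> S i))"
proof -
  have "(\<Inter>i\<in>{1..m}. S i) = {..<n} \<inter> {j. \<forall>i\<in>{1..m}. j \<in> S i}"
    using assms by auto
  then show ?thesis
    unfolding X_all_def by (simp add: prod_of_bool)
qed

lemma set_pmf_coupon_pmf:
  assumes "\<forall>i\<in>{1..m}. a i \<le> n"
  shows "set_pmf (coupon_pmf n m a) = PiE_dflt {1..m} {} (\<lambda>i. k_subsets n (a i))"
  unfolding coupon_pmf_def k_subsets_def[symmetric]
  using assms finite_k_subsets k_subsets_nonempty by (subst set_Pi_pmf) (auto simp: PiE_dflt_def)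

lemma X_all_coupon_pmf_eq_sum_indicators:
  assumes "m \<ge> 1" "\<forall>i\<in>{1..m}. a i \<le> n" "S \<in> set_pmf (coupon_pmf n m a)"
  shows "X_all m S = (\<Sum>j<n. \<Prod>i\<in>{1..m}. of_bool (j \<in> S i))"
  using assms by (intro X_all_eq_sum_indicators) (auto simp: set_pmf_coupon_pmf PiE_dflt_def k_subsets_def)

lemma integrable_coupon_pmf:
  fixes f :: "(nat \<Rightarrow> nat set) \<Rightarrow> real"
  assumes "\<forall>i\<in>{1..m}. a i \<le> n"
  shows "integrable (coupon_pmf n m a) f"
  using assms by (intro integrable_measure_pmf_finite)
    (auto simp: set_pmf_coupon_pmf finite_k_subsets intro!: finite_PiE_dflt)

lemma expectation_coupon_pmf_prod:
  fixes f :: "nat set \<Rightarrow> real"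
  assumes "\<forall>i\<in>{1..m}. a i \<le> n" "\<And>T. 0 \<le> f T"
  shows "measure_pmf.expectation (coupon_pmf n m a) (\<lambda>S. \<Prod>i\<in>{1..m}. f (S i))
       = (\<Prod>i\<in>{1..m}. measure_pmf.expectation (pmf_of_set (k_subsets n (a i))) f)"
  unfolding coupon_pmf_def k_subsets_def[symmetric]
  using assms by (intro expectation_prod_Pi_pmf[where f = "\<lambda>_. f"])
    (auto intro!: integrable_measure_pmf_finite simp: finite_k_subsets k_subsets_nonempty)

definition common_prob1 :: "nat \<Rightarrow> (nat \<Rightarrow> nat) \<Rightarrow> nat set \<Rightarrow> real" where
  "common_prob1 n a A = (\<Prod>i\<in>A. real (a i) / real n)"

definition common_prob2 :: "nat \<Rightarrow> (nat \<Rightarrow> nat) \<Rightarrow> nat set \<Rightarrow> real" where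
  "common_prob2 n a A = (\<Prod>i\<in>A. real (a i) * (real (a i) - 1) / (real n * (real n - 1)))"

definition common_var :: "nat \<Rightarrow> (nat \<Rightarrow> nat) \<Rightarrow> nat set \<Rightarrow> real" where
  "common_var n a A = real n * common_prob1 n a A + real n * (real n - 1) * common_prob2 n a A
                      - (real n)\<^sup>2 * (common_prob1 n a A)\<^sup>2"

lemma expectation_X_all:
  assumes "m \<ge> 1" "\<forall>i\<in>{1..m}. a i \<le> n"
  shows "measure_pmf.expectation (coupon_pmf n m a) (X_all m) = real n * common_prob1 n a {1..m}"
proof -
  let ?M = "coupon_pmf n m a"
  have "measure_pmf.expectation ?M (X_all m)
      = measure_pmf.expectation ?M (\<lambda>S. \<Sum>j<n. \<Prod>i\<in>{1..m}. of_bool (j \<in> S i))"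
    using assms by (intro integral_cong_AE) (auto simp: AE_measure_pmf_iff X_all_coupon_pmf_eq_sum_indicators)
  also have "\<dots> = (\<Sum>j<n. measure_pmf.expectation ?M (\<lambda>S. \<Prod>i\<in>{1..m}. of_bool (j \<in> S i)))"
    using assms by (intro Bochner_Integration.integral_sum integrable_coupon_pmf)
  also have "\<dots> = (\<Sum>j<n. common_prob1 n a {1..m})"
    using assms unfolding common_prob1_def
    by (intro sum.cong refl, subst expectation_coupon_pmf_prod)
      (auto intro!: prod.cong simp: expectation_k_subsets_member)
  finally show ?thesis by simp
qed

lemma expectation_X_all_squared:
  assumes "m \<ge> 1" "\<forall>i\<in>{1..m}. a i \<le> n"
  shows "measure_pmf.expectation (coupon_pmf n m a) (\<lambda>S. (X_all m S)\<^sup>2)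
       = real n * common_prob1 n a {1..m} + real n * (real n - 1) * common_prob2 n a {1..m}"
proof -
  let ?M = "coupon_pmf n m a"
  let ?E = "\<lambda>j l. measure_pmf.expectation ?M (\<lambda>S. \<Prod>i\<in>{1..m}. of_bool (j \<in> S i \<and> l \<in> S i))"
  have "measure_pmf.expectation ?M (\<lambda>S. (X_all m S)\<^sup>2)
      = measure_pmf.expectation ?M (\<lambda>S. \<Sum>j<n. \<Sum>l<n. \<Prod>i\<in>{1..m}. of_bool (j \<in> S i \<and> l \<in> S i))"
    using assms by (intro integral_cong_AE)
      (auto simp: AE_measure_pmf_iff X_all_coupon_pmf_eq_sum_indicators power2_eq_square sum_product
        prod.distrib[symmetric] of_bool_conj)
  also have "\<dots> = (\<Sum>j<n. \<Sum>l<n. ?E j l)"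
    using assms by (simp add: Bochner_Integration.integral_sum integrable_coupon_pmf)
  also have "\<dots> = (\<Sum>j<n. \<Sum>l<n. common_prob2 n a {1..m}
                      + (if l = j then common_prob1 n a {1..m} - common_prob2 n a {1..m} else 0))"
    using assms unfolding common_prob1_def common_prob2_def
    by (intro sum.cong refl, subst expectation_coupon_pmf_prod)
      (auto intro!: prod.cong simp: expectation_k_subsets_member expectation_k_subsets_pair)
  also have "\<dots> = real n * common_prob1 n a {1..m} + real n * (real n - 1) * common_prob2 n a {1..m}"
    by (simp add: sum.distrib algebra_simps)
  finally show ?thesis .
qed

lemma coupon_var_eq_common_var:
  assumes "m \<ge> 1" "\<forall>i\<in>{1..m}. a i \<le> n"
  shows "coupon_var n m a = common_var n a {1..m}"
proof -
  have "coupon_var n m a = measure_pmf.expectation (coupon_pmf n m a) (\<lambda>S. (X_all m S)\<^sup>2)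
                          - (measure_pmf.expectation (coupon_pmf n m a) (X_all m))\<^sup>2"
    unfolding coupon_var_def using assms by (intro measure_pmf.variance_eq integrable_coupon_pmf)
  then show ?thesis
    using assms by (simp add: expectation_X_all expectation_X_all_squared common_var_def power_mult_distrib)
qed

lemma common_var_remove:
  assumes "finite A" "k \<in> A" "n \<ge> 2"
  shows "common_var n a A
       = (real n)\<^sup>2 / (real n - 1) * (real (a k) / real n) * (1 - real (a k) / real n)
           * common_prob1 n a (A - {k}) * (1 - common_prob1 n a (A - {k}))
         + real (a k) * (real (a k) - 1) / (real n * (real n - 1)) * common_var n a (A - {k})"
proof -
  have P: "common_prob1 n a A = real (a k) / real n * common_prob1 n a (A - {k})"
    unfolding common_prob1_def using assms by (simp add: prod.remove)
  have Q: "common_prob2 n a A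
         = real (a k) * (real (a k) - 1) / (real n * (real n - 1)) * common_prob2 n a (A - {k})"
    unfolding common_prob2_def using assms by (simp add: prod.remove)
  have identity: "x * (c / x * P) + x * y * (c * (c - 1) / (x * y) * Q) - x\<^sup>2 * (c / x * P)\<^sup>2
      = x\<^sup>2 / y * (c / x) * (1 - c / x) * P * (1 - P)
        + c * (c - 1) / (x * y) * (x * P + x * y * Q - x\<^sup>2 * P\<^sup>2)"
    if "y > 0" "x = y + 1" for x y c P Q :: real
  proof -
    have "x > 0" using that by simp
    have L: "x * (c / x * P) + x * y * (c * (c - 1) / (x * y) * Q) - x\<^sup>2 * (c / x * P)\<^sup>2
           = c * P + c * (c - 1) * Q - c\<^sup>2 * P\<^sup>2"
      using \<open>x > 0\<close> \<open>y > 0\<close> by (simp add: field_simps power2_eq_square)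
    have R: "x\<^sup>2 / y * (c / x) * (1 - c / x) * P * (1 - P)
             + c * (c - 1) / (x * y) * (x * P + x * y * Q - x\<^sup>2 * P\<^sup>2)
           = (c * (x - c) * P * (1 - P) + c * (c - 1) * (P - x * P\<^sup>2)) / y + c * (c - 1) * Q"
      using \<open>x > 0\<close> \<open>y > 0\<close> by (simp add: field_simps power2_eq_square)
    have "c * (x - c) * P * (1 - P) + c * (c - 1) * (P - x * P\<^sup>2) = y * (c * P - c\<^sup>2 * P\<^sup>2)"
      using that by (simp add: algebra_simps power2_eq_square)
    then show ?thesis unfolding L R using that(1) by (simp add: field_simps)
  qed
  show ?thesis
    unfolding common_var_def P Q using assms by (intro identity) auto
qed

lemma common_prob1_nonneg: "0 \<le> common_prob1 n a A"
  unfolding common_prob1_def by (intro prod_nonneg) auto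

lemma common_prob1_le_1: "\<forall>i\<in>A. a i \<le> n \<Longrightarrow> common_prob1 n a A \<le> 1"
  unfolding common_prob1_def by (auto intro!: prod_le_1 simp: divide_le_eq_1)

lemma common_prob1_antimono:
  assumes "finite A" "B \<subseteq> A" "\<forall>i\<in>A. a i \<le> n"
  shows "common_prob1 n a A \<le> common_prob1 n a B"
proof -
  have "common_prob1 n a A = common_prob1 n a (A - B) * common_prob1 n a B"
    unfolding common_prob1_def using assms by (simp add: prod.subset_diff)
  also have "\<dots> \<le> 1 * common_prob1 n a B"
    using assms by (intro mult_right_mono common_prob1_le_1 common_prob1_nonneg) auto
  finally show ?thesis by simp
qed

lemma common_prob1_ge_power:
  assumes "\<forall>i\<in>A. c \<le> a i"
  shows "(real c / real n) ^ card A \<le> common_prob1 n a A"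
proof -
  have "(\<Prod>i\<in>A. real c / real n) \<le> common_prob1 n a A"
    unfolding common_prob1_def using assms by (intro prod_mono) (auto intro: divide_right_mono)
  then show ?thesis by simp
qed

lemma common_var_nonneg:
  assumes "finite A" "n \<ge> 2" "\<forall>i\<in>A. a i \<le> n"
  shows "0 \<le> common_var n a A"
  using assms
proof (induction A rule: finite_induct)
  case empty
  then show ?case by (simp add: common_var_def common_prob1_def common_prob2_def power2_eq_square algebra_simps)
next
  case (insert k A)
  let ?p = "real (a k) / real n" and ?P = "common_prob1 n a A"
  have "insert k A - {k} = A" using insert by auto
  moreover have "0 \<le> real (a k) * (real (a k) - 1)" by (cases "a k") auto
  moreover have "0 \<le> ?p" "?p \<le> 1" "?P \<le> 1"
    using insert by (auto intro: common_prob1_le_1)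
  ultimately show ?case
    using insert common_prob1_nonneg[of n a A]
    by (subst common_var_remove[of _ k]) (auto intro!: add_nonneg_nonneg mult_nonneg_nonneg)
qed

lemma common_var_ge_remove:
  assumes "finite A" "k \<in> A" "n \<ge> 2" "\<forall>i\<in>A. a i \<le> n"
  shows "real n * (real (a k) / real n) * (1 - real (a k) / real n)
           * common_prob1 n a (A - {k}) * (1 - common_prob1 n a (A - {k})) \<le> common_var n a A"
proof -
  let ?p = "real (a k) / real n" and ?P = "common_prob1 n a (A - {k})"
  have "real n \<le> (real n)\<^sup>2 / (real n - 1)"
    using assms by (simp add: field_simps power2_eq_square)
  moreover have "0 \<le> ?p * (1 - ?p) * ?P * (1 - ?P)"
    using assms common_prob1_nonneg[of n a "A - {k}"] common_prob1_le_1[of "A - {k}" a n] by auto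
  ultimately have "real n * (?p * (1 - ?p) * ?P * (1 - ?P))
      \<le> (real n)\<^sup>2 / (real n - 1) * (?p * (1 - ?p) * ?P * (1 - ?P))"
    by (rule mult_right_mono)
  moreover have "0 \<le> real (a k) * (real (a k) - 1) / (real n * (real n - 1)) * common_var n a (A - {k})"
    using assms common_var_nonneg[of "A - {k}" n a] by (cases "a k") auto
  ultimately show ?thesis
    using assms by (subst common_var_remove[of _ k]) (auto simp: mult.assoc)
qed

lemma common_var_ge_first:
  assumes "m \<ge> 2" "n \<ge> 2" "mono_on {1..m} a" "a m \<le> n"
  shows "(real (a 1) / real n) ^ m * (1 - real (a 1) / real n) * real (n - a 2)
           \<le> common_var n a {1..m}"
proof -
  let ?p = "\<lambda>i. real (a i) / real n" and ?P = "common_prob1 n a ({1..m} - {1})"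
  have le_n: "\<forall>i\<in>{1..m}. a i \<le> n"
    using assms by (auto dest: mono_onD[of _ _ _ m])
  have "{1..m} - {1} = {2..m}" by auto
  moreover have "\<forall>i\<in>{2..m}. a 1 \<le> a i"
    using assms by (auto intro!: mono_onD[OF assms(3)])
  ultimately have "?p 1 ^ (m - 1) \<le> ?P"
    using common_prob1_ge_power[of "{2..m}" "a 1" a n] by simp
  moreover have "?P \<le> common_prob1 n a {2}"
    using assms le_n by (intro common_prob1_antimono) auto
  then have "1 - ?p 2 \<le> 1 - ?P" by (simp add: common_prob1_def)
  moreover have "0 \<le> ?p 1" "?p 1 \<le> 1" "?p 2 \<le> 1" using le_n assms by auto
  ultimately have "real n * ?p 1 * (1 - ?p 1) * (?p 1 ^ (m - 1) * (1 - ?p 2))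
      \<le> real n * ?p 1 * (1 - ?p 1) * (?P * (1 - ?P))"
    by (intro mult_left_mono mult_mono) (auto simp del: times_divide_eq_left intro: common_prob1_nonneg)
  also have "\<dots> \<le> common_var n a {1..m}"
    using common_var_ge_remove[of "{1..m}" 1 n a] assms le_n by (simp add: mult.assoc)
  also have "real n * ?p 1 * (1 - ?p 1) * (?p 1 ^ (m - 1) * (1 - ?p 2))
      = ?p 1 ^ m * (1 - ?p 1) * real (n - a 2)"
    using assms le_n by (simp add: of_nat_diff field_simps power_eq_if[of _ m])
  finally show ?thesis .
qed

lemma common_var_ge_second:
  assumes "m \<ge> 2" "n \<ge> 2" "mono_on {1..m} a" "a m \<le> n"
  shows "(real (a 2) / real n) ^ (m - 1) * (1 - real (a 2) / real n)\<^sup>2 * real (a 1)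
           \<le> common_var n a {1..m}"
proof -
  let ?p = "\<lambda>i. real (a i) / real n" and ?P = "common_prob1 n a ({1..m} - {2})"
  have le_n: "\<forall>i\<in>{1..m}. a i \<le> n"
    using assms by (auto dest: mono_onD[of _ _ _ m])
  have P: "?P = ?p 1 * common_prob1 n a {3..m}"
  proof -
    have "{1..m} - {2} = insert 1 {3..m}" using assms by auto
    then show ?thesis unfolding common_prob1_def by simp
  qed
  have "\<forall>i\<in>{3..m}. a 2 \<le> a i"
    using assms by (auto intro!: mono_onD[OF assms(3)])
  then have "?p 2 ^ (m - 2) \<le> common_prob1 n a {3..m}"
    using common_prob1_ge_power[of "{3..m}" "a 2" a n] by simp
  then have lower: "?p 1 * ?p 2 ^ (m - 2) \<le> ?P"
    unfolding P by (intro mult_left_mono) auto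
  have "?P \<le> common_prob1 n a {1}"
    using assms le_n by (intro common_prob1_antimono) auto
  moreover have "?p 1 \<le> ?p 2"
    using assms by (intro divide_right_mono) (auto intro!: mono_onD[OF assms(3)])
  ultimately have "1 - ?p 2 \<le> 1 - ?P" by (simp add: common_prob1_def)
  moreover note lower
  moreover have "0 \<le> ?p 2" "?p 2 \<le> 1" "?p 1 \<le> 1" using le_n assms by auto
  ultimately have "real n * ?p 2 * (1 - ?p 2) * (?p 1 * ?p 2 ^ (m - 2) * (1 - ?p 2))
      \<le> real n * ?p 2 * (1 - ?p 2) * (?P * (1 - ?P))"
    by (intro mult_left_mono mult_mono) (auto simp del: times_divide_eq_left intro: common_prob1_nonneg)
  also have "\<dots> \<le> common_var n a {1..m}"
    using common_var_ge_remove[of "{1..m}" 2 n a] assms le_n by (simp add: mult.assoc)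
  also have "real n * ?p 2 * (1 - ?p 2) * (?p 1 * ?p 2 ^ (m - 2) * (1 - ?p 2))
      = ?p 2 ^ (m - 1) * (1 - ?p 2)\<^sup>2 * real (a 1)"
  proof -
    have "?p 2 * ?p 2 ^ (m - 2) = ?p 2 ^ (m - 1)"
      using assms by (simp flip: power_Suc add: Suc_diff_Suc numeral_2_eq_2)
    then show ?thesis using assms by (simp add: field_simps power2_eq_square)
  qed
  finally show ?thesis .
qed

lemma mono_on_atLeastAtMostI:
  fixes f :: "nat \<Rightarrow> 'a :: order"
  assumes "\<And>i. i \<in> {l..<u} \<Longrightarrow> f i \<le> f (Suc i)"
  shows "mono_on {l..u} f"
  by (rule mono_onI) (auto intro: lift_Suc_mono_le_ivl[of "{l..<u}"] assms)

lemma coupon_var_at_top_first_interior: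
  fixes a :: "nat \<Rightarrow> nat \<Rightarrow> nat"
  assumes "m \<ge> 2"
    and sorted: "\<forall>\<^sub>F n in sequentially. n \<ge> 2 \<and> mono_on {1..m} (a n) \<and> a n m \<le> n"
    and gap: "filterlim (\<lambda>n. n - a n 2) at_top sequentially"
    and lim: "(\<lambda>n. real (a n 1) / real n) \<longlonglongrightarrow> \<alpha>" and "0 < \<alpha>" "\<alpha> < 1"
  shows "filterlim (\<lambda>n. coupon_var n m (a n)) at_top sequentially"
proof (rule filterlim_at_top_mono)
  let ?p = "\<lambda>n. real (a n 1) / real n"
  have "((\<lambda>n. ?p n ^ m * (1 - ?p n)) \<longlongrightarrow> \<alpha> ^ m * (1 - \<alpha>)) sequentially"
    by (intro tendsto_intros lim)
  then show "filterlim (\<lambda>n. ?p n ^ m * (1 - ?p n) * real (n - a n 2)) at_top sequentially"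
    by (rule filterlim_tendsto_pos_mult_at_top)
      (use assms in \<open>auto intro: filterlim_compose[OF filterlim_real_sequentially]\<close>)
  show "\<forall>\<^sub>F n in sequentially. ?p n ^ m * (1 - ?p n) * real (n - a n 2) \<le> coupon_var n m (a n)"
    using sorted
  proof eventually_elim
    case (elim n)
    then have "\<forall>i\<in>{1..m}. a n i \<le> n" by (auto dest: mono_onD[of _ _ _ m])
    then show ?case
      using common_var_ge_first[of m n "a n"] coupon_var_eq_common_var[of m "a n" n] elim assms(1) by simp
  qed
qed

lemma coupon_var_at_top_second_interior:
  fixes a :: "nat \<Rightarrow> nat \<Rightarrow> nat"
  assumes "m \<ge> 2"
    and sorted: "\<forall>\<^sub>F n in sequentially. n \<ge> 2 \<and> mono_on {1..m} (a n) \<and> a n m \<le> n"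
    and "filterlim (\<lambda>n. a n 1) at_top sequentially"
    and lim: "(\<lambda>n. real (a n 2) / real n) \<longlonglongrightarrow> \<alpha>" and "0 < \<alpha>" "\<alpha> < 1"
  shows "filterlim (\<lambda>n. coupon_var n m (a n)) at_top sequentially"
proof (rule filterlim_at_top_mono)
  let ?p = "\<lambda>n. real (a n 2) / real n"
  have "((\<lambda>n. ?p n ^ (m - 1) * (1 - ?p n)\<^sup>2) \<longlongrightarrow> \<alpha> ^ (m - 1) * (1 - \<alpha>)\<^sup>2) sequentially"
    by (intro tendsto_intros lim)
  then show "filterlim (\<lambda>n. ?p n ^ (m - 1) * (1 - ?p n)\<^sup>2 * real (a n 1)) at_top sequentially"
    by (rule filterlim_tendsto_pos_mult_at_top)
      (use assms in \<open>auto intro: filterlim_compose[OF filterlim_real_sequentially]\<close>)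
  show "\<forall>\<^sub>F n in sequentially. ?p n ^ (m - 1) * (1 - ?p n)\<^sup>2 * real (a n 1) \<le> coupon_var n m (a n)"
    using sorted
  proof eventually_elim
    case (elim n)
    then have "\<forall>i\<in>{1..m}. a n i \<le> n" by (auto dest: mono_onD[of _ _ _ m])
    then show ?case
      using common_var_ge_second[of m n "a n"] coupon_var_eq_common_var[of m "a n" n] elim assms(1) by simp
  qed
qed

lemma coupon_var_two_equal_sizes:
  assumes "n \<ge> 2" "c \<le> n"
  shows "coupon_var n 2 (\<lambda>_. c) = (real c)\<^sup>2 * (real n - real c)\<^sup>2 / ((real n)\<^sup>2 * (real n - 1))"
proof -
  have identity: "x * (c' / x)\<^sup>2 + x * y * (c' * (c' - 1) / (x * y))\<^sup>2 - x\<^sup>2 * ((c' / x)\<^sup>2)\<^sup>2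
      = c'\<^sup>2 * (x - c')\<^sup>2 / (x\<^sup>2 * y)"
    if "y > 0" "x = y + 1" for x y c' :: real
  proof -
    have "x > 0" using that by simp
    then have "x * (c' / x)\<^sup>2 + x * y * (c' * (c' - 1) / (x * y))\<^sup>2 - x\<^sup>2 * ((c' / x)\<^sup>2)\<^sup>2
        = (c'\<^sup>2 * x * y + c'\<^sup>2 * (c' - 1)\<^sup>2 * x - c'\<^sup>2 * c'\<^sup>2 * y) / (x\<^sup>2 * y)"
      using \<open>y > 0\<close> by (simp add: field_simps power2_eq_square)
    also have "c'\<^sup>2 * x * y + c'\<^sup>2 * (c' - 1)\<^sup>2 * x - c'\<^sup>2 * c'\<^sup>2 * y = c'\<^sup>2 * (x - c')\<^sup>2"
      using that(2) by (simp add: algebra_simps power2_eq_square)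
    finally show ?thesis .
  qed
  have "coupon_var n 2 (\<lambda>_. c) = common_var n (\<lambda>_. c) {1..2}"
    using assms by (intro coupon_var_eq_common_var) auto
  also have "\<dots> = real n * (real c / real n)\<^sup>2
      + real n * (real n - 1) * (real c * (real c - 1) / (real n * (real n - 1)))\<^sup>2
      - (real n)\<^sup>2 * ((real c / real n)\<^sup>2)\<^sup>2"
    unfolding common_var_def common_prob1_def common_prob2_def by (simp add: power2_eq_square)
  also have "\<dots> = (real c)\<^sup>2 * (real n - real c)\<^sup>2 / ((real n)\<^sup>2 * (real n - 1))"
    using assms by (intro identity) auto
  finally show ?thesis .
qed

lemma coupon_var_two_collectors_asymp_equiv:
  "(\<lambda>n. coupon_var n 2 (\<lambda>_. nat \<lfloor>real n powr (2/3)\<rfloor>)) \<sim>[sequentially] (\<lambda>n. real n powr (1/3))"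
proof -
  have closed_form: "\<forall>\<^sub>F n in sequentially. coupon_var n 2 (\<lambda>_. nat \<lfloor>real n powr (2/3)\<rfloor>)
      = (real (nat \<lfloor>real n powr (2/3)\<rfloor>))\<^sup>2 * (real n - real (nat \<lfloor>real n powr (2/3)\<rfloor>))\<^sup>2
          / ((real n)\<^sup>2 * (real n - 1))"
    using eventually_ge_at_top[of 2]
  proof eventually_elim
    case (elim n)
    have "real n powr (2/3) \<le> real n powr 1" using elim by (intro powr_mono) auto
    then have "\<lfloor>real n powr (2/3)\<rfloor> \<le> \<lfloor>real n\<rfloor>" using elim by (intro floor_mono) simp
    then have "nat \<lfloor>real n powr (2/3)\<rfloor> \<le> n" by (simp add: nat_le_iff)
    then show ?case using elim by (intro coupon_var_two_equal_sizes)
  qed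
  have "(\<lambda>n::nat. (real (nat \<lfloor>real n powr (2/3)\<rfloor>))\<^sup>2 * (real n - real (nat \<lfloor>real n powr (2/3)\<rfloor>))\<^sup>2
          / ((real n)\<^sup>2 * (real n - 1))) \<sim>[sequentially] (\<lambda>n. real n powr (1/3))"
    by real_asymp
  then show ?thesis
    using asymp_equiv_cong[OF closed_form, of "\<lambda>n. real n powr (1/3)" "\<lambda>n. real n powr (1/3)"] by simp
qed

lemma coupon_var_two_collectors_at_top:
  "filterlim (\<lambda>n. coupon_var n 2 (\<lambda>_. nat \<lfloor>real n powr (2/3)\<rfloor>)) at_top sequentially"
proof (rule asymp_equiv_at_top_transfer)
  show "(\<lambda>n. real n powr (1/3)) \<sim>[sequentially] (\<lambda>n. coupon_var n 2 (\<lambda>_. nat \<lfloor>real n powr (2/3)\<rfloor>))"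
    using coupon_var_two_collectors_asymp_equiv by (rule asymp_equiv_symI)
  show "filterlim (\<lambda>n. real n powr (1/3)) at_top sequentially"
    by real_asymp
qed

theorem corollary1:
  fixes m :: nat and a :: "nat \<Rightarrow> nat \<Rightarrow> nat" and \<alpha> :: "nat \<Rightarrow> real"
  assumes m2: "m \<ge> 2"
    and A2: "\<forall>i\<in>{1..m}. filterlim (\<lambda>n. a n i) at_top sequentially
                        \<and> filterlim (\<lambda>n. n - a n i) at_top sequentially"
    and A3: "eventually (\<lambda>n. 1 \<le> a n 1 \<and> (\<forall>i\<in>{1..<m}. a n i \<le> a n (Suc i))
                             \<and> a n m \<le> n - 1) sequentially"
    and A4: "\<forall>i\<in>{1..m}. (\<lambda>n. real (a n i) / real n) \<longlonglongrightarrow> \<alpha> i"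
  shows "(convergent (\<lambda>n. coupon_var n m (a n)) \<longrightarrow> \<alpha> 1 \<in> {0, 1} \<and> \<alpha> 2 \<in> {0, 1})
       \<and> ((\<lambda>n. coupon_var n 2 (\<lambda>i. nat \<lfloor>real n powr (2/3)\<rfloor>))
              \<sim>[sequentially] (\<lambda>n. real n powr (1/3)))
       \<and> filterlim (\<lambda>n. coupon_var n 2 (\<lambda>i. nat \<lfloor>real n powr (2/3)\<rfloor>)) at_top sequentially"
proof -
  have sorted: "\<forall>\<^sub>F n in sequentially. n \<ge> 2 \<and> mono_on {1..m} (a n) \<and> a n m \<le> n"
    using A3 eventually_ge_at_top[of 2] by eventually_elim (auto intro: mono_on_atLeastAtMostI)
  have alpha_bounds: "0 \<le> \<alpha> i" "\<alpha> i \<le> 1" if "i \<in> {1..m}" for i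
  proof -
    have lim: "(\<lambda>n. real (a n i) / real n) \<longlonglongrightarrow> \<alpha> i" using A4 that by blast
    then show "0 \<le> \<alpha> i" by (rule tendsto_lowerbound) auto
    have "\<forall>\<^sub>F n in sequentially. real (a n i) / real n \<le> 1"
      using sorted by eventually_elim (use that in \<open>auto dest: mono_onD[of _ _ _ m]\<close>)
    with lim show "\<alpha> i \<le> 1" by (rule tendsto_upperbound) auto
  qed
  have "\<not> convergent (\<lambda>n. coupon_var n m (a n))" if "\<alpha> 1 \<notin> {0, 1} \<or> \<alpha> 2 \<notin> {0, 1}"
  proof -
    have "filterlim (\<lambda>n. coupon_var n m (a n)) at_top sequentially"
      using that alpha_bounds[of 1] alpha_bounds[of 2] m2 A2 A4
        coupon_var_at_top_first_interior[OF m2 sorted, of "\<alpha> 1"]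
        coupon_var_at_top_second_interior[OF m2 sorted, of "\<alpha> 2"]
      by force
    then show ?thesis
      using not_tendsto_and_filterlim_at_infinity[OF _ _ filterlim_at_top_imp_at_infinity]
      by (metis convergent_def trivial_limit_sequentially)
  qed
  then show ?thesis
    using coupon_var_two_collectors_asymp_equiv coupon_var_two_collectors_at_top by blast
qed

end
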